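(* For spans $A\leftarrow M\to B$ and $B\leftarrow N\to C$, regarded as linear bicomodules $M\mathcal y\colon A\mathcal y\Leftarrow B\mathcal y$ and $N\mathcal y\colon B\mathcal y\Leftarrow C\mathcal y$, there is an isomorphism of $(A\mathcal y,C\mathcal y)$-bicomodules $$(M\mathcal y)^\vee\triangleleft_{B\mathcal y}(N\mathcal y)^\vee\;\cong\;\big(M\mathcal y\triangleleft_{B\mathcal y}N\mathcal y\big)^\vee.$$
   Context: $C\mathcal y$ is the discrete category (comonoid in $(\mathbf{Poly},\mathcal y,\triangleleft)$) on a set $C$; bicomodules between discrete categories with linear carrier are spans, and $\triangleleft_{B\mathcal y}$ (bicomodule composition, an equalizer in $\mathbf{Poly}$) corresponds on spans to composition by pullback. For a span $C\xleftarrow{f}M\xrightarrow{g}D$ with fibers $M_a$ over $a\in C$, the dual is the conjunctive bicomodule $(M\mathcal y)^\vee\cong\sum_{a\in C}\mathcal y^{M_a}$ (defined as $[M\mathcal y,\bot]$ for the local internal hom and the terminal span $\bot$), whose prafunctor $D\text{-}\mathbf{Set}\to C\text{-}\mathbf{Set}$ is $\Pi_f\Delta_g$. *)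

theory Defs
  imports "HOL-Library.FuncSet"
begin

text \<open>Concrete model of bicomodules between discrete categories A y and B y
(A, B sets). Such a bicomodule is a polynomial  sum over positions p of y^(dir p),
together with a label lbl p in A of each position (left coaction) and a label
rl p e in B of each direction e at p (right coaction).\<close>

record ('p, 'e, 'a, 'b) bicom =
  pos :: "'p set"
  lbl :: "'p \<Rightarrow> 'a"
  dir :: "'p \<Rightarrow> 'e set"
  rl  :: "'p \<Rightarrow> 'e \<Rightarrow> 'b"

definition bicom_on :: "'a set \<Rightarrow> 'b set \<Rightarrow> ('p, 'e, 'a, 'b) bicom \<Rightarrow> bool" where
  "bicom_on A B P \<longleftrightarrow> lbl P \<in> pos P \<rightarrow> A \<and> (\<forall>p\<in>pos P. rl P p \<in> dir P p \<rightarrow> B)"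

text \<open>Composition over the middle discrete comonoid (the equalizer in Poly):
a position is a position i of P together with, for each direction e of i,
a position of Q whose left label equals the right label of e.\<close>

definition bicom_comp ::
  "('p, 'e, 'a, 'b) bicom \<Rightarrow> ('q, 'd, 'b, 'c) bicom \<Rightarrow> ('p \<times> ('e \<Rightarrow> 'q), 'e \<times> 'd, 'a, 'c) bicom" where
  "bicom_comp P Q = \<lparr> pos = {(i, h). i \<in> pos P \<and>
                              h \<in> (\<Pi>\<^sub>E e\<in>dir P i. {j \<in> pos Q. lbl Q j = rl P i e})},
                      lbl = (\<lambda>(i, h). lbl P i),
                      dir = (\<lambda>(i, h). Sigma (dir P i) (\<lambda>e. dir Q (h e))),
                      rl = (\<lambda>(i, h) (e, d). rl Q (h e) d) \<rparr>"

text \<open>Isomorphism of (A y, C y)-bicomodules: bijection on positions preserving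
left labels, and for each position a bijection of directions (going backwards,
as in Poly) preserving right labels.\<close>

definition bicom_iso :: "('p, 'e, 'a, 'b) bicom \<Rightarrow> ('q, 'd, 'a, 'b) bicom \<Rightarrow> bool" where
  "bicom_iso P Q \<longleftrightarrow> (\<exists>\<phi> \<psi>. bij_betw \<phi> (pos P) (pos Q) \<and>
      (\<forall>p\<in>pos P. lbl Q (\<phi> p) = lbl P p \<and>
                 bij_betw (\<psi> p) (dir Q (\<phi> p)) (dir P p) \<and>
                 (\<forall>d\<in>dir Q (\<phi> p). rl P p (\<psi> p d) = rl Q (\<phi> p) d)))"

definition lin_bicom :: "'m set \<Rightarrow> ('m \<Rightarrow> 'a) \<Rightarrow> ('m \<Rightarrow> 'b) \<Rightarrow> ('m, unit, 'a, 'b) bicom" where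
  "lin_bicom M f g = \<lparr> pos = M, lbl = f, dir = (\<lambda>_. {()}), rl = (\<lambda>m _. g m) \<rparr>"

definition is_span :: "'a set \<Rightarrow> 'b set \<Rightarrow> 'm set \<Rightarrow> ('m \<Rightarrow> 'a) \<Rightarrow> ('m \<Rightarrow> 'b) \<Rightarrow> bool" where
  "is_span A B M f g \<longleftrightarrow> f \<in> M \<rightarrow> A \<and> g \<in> M \<rightarrow> B"

text \<open>The dual (conjunctive bicomodule) of a linear bicomodule P : A y <= B y,
i.e. of the span A <-lbl- pos P -g-> B with g p the right label of the unique
direction at p:  (P)^dual = sum over a in A of y^(fiber over a).\<close>

definition lin_dual :: "'a set \<Rightarrow> ('p, 'e, 'a, 'b) bicom \<Rightarrow> ('a, 'p, 'a, 'b) bicom" where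
  "lin_dual A P = \<lparr> pos = A, lbl = id, dir = (\<lambda>a. {p \<in> pos P. lbl P p = a}),
                    rl = (\<lambda>a p. rl P p (THE e. e \<in> dir P p)) \<rparr>"

end

theory Submission
  imports Defs
begin

text \<open>Both sides have exactly one position over each a \<in> A. On the left, a position of a
composite with a dual over B must send every direction m to its own right label g m, so a is
the only freedom, and the directions over a are the pairs (m, n) with f m = a and f' n = g m.
On the right, the directions over a are the positions of the composite span lying over a:
the same pairs, except that n appears as a function on the single direction of M y.
Evaluating that function at () is the bijection of directions, and both sides label (m, n)
by g' n.\<close>

lemma bij_betw_eval_singleton: "bij_betw (\<lambda>k. k a) (\<Pi>\<^sub>E e\<in>{a}. B e) (B a)"
proof (rule bij_betw_byWitness[where f' = "\<lambda>b. \<lambda>_\<in>{a}. b"])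
  show "\<forall>k\<in>\<Pi>\<^sub>E e\<in>{a}. B e. (\<lambda>_\<in>{a}. k a) = k"
    by (metis PiE_restrict restrict_ext singletonD)
  show "(\<lambda>b. \<lambda>_\<in>{a}. b) ` B a \<subseteq> (\<Pi>\<^sub>E e\<in>{a}. B e)"
    by (simp add: image_subset_iff)
qed auto

lemma bij_betw_Sigma_fibrewise:
  assumes "\<And>x. x \<in> S \<Longrightarrow> bij_betw (h x) (T x) (U x)"
  shows "bij_betw (\<lambda>(x, y). (x, h x y)) (Sigma S T) (Sigma S U)"
proof (rule bij_betw_imageI)
  show "inj_on (\<lambda>(x, y). (x, h x y)) (Sigma S T)"
    using assms by (auto simp: inj_on_def bij_betw_def)
  show "(\<lambda>(x, y). (x, h x y)) ` Sigma S T = Sigma S U"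
  proof
    show "(\<lambda>(x, y). (x, h x y)) ` Sigma S T \<subseteq> Sigma S U"
      using assms by (auto dest: bij_betw_apply)
    show "Sigma S U \<subseteq> (\<lambda>(x, y). (x, h x y)) ` Sigma S T"
    proof clarify
      fix x u assume x: "x \<in> S" and "u \<in> U x"
      then obtain t where "t \<in> T x" and "u = h x t"
        using assms by (metis bij_betw_def imageE)
      with x show "(x, u) \<in> (\<lambda>(x, y). (x, h x y)) ` Sigma S T"
        by force
    qed
  qed
qed

lemma pos_bicom_comp_lin_dual:
  assumes "\<And>i. i \<in> pos P \<Longrightarrow> rl P i \<in> dir P i \<rightarrow> B"
  shows "pos (bicom_comp P (lin_dual B Q)) = (\<lambda>i. (i, restrict (rl P i) (dir P i))) ` pos P"
  using assms by (fastforce simp: bicom_comp_def lin_dual_def PiE_def Pi_def extensional_def)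

lemma dir_bicom_comp_lin_dual:
  "dir (bicom_comp P (lin_dual B Q)) (i, h) = (SIGMA e:dir P i. {q \<in> pos Q. lbl Q q = h e})"
  by (simp add: bicom_comp_def lin_dual_def)

lemma dir_lin_dual_comp_lin_bicom:
  "dir (lin_dual A (bicom_comp (lin_bicom M f g) (lin_bicom N f' g'))) a =
     (SIGMA m:{m \<in> M. f m = a}. \<Pi>\<^sub>E e\<in>{()}. {n \<in> N. f' n = g m})"
  by (auto simp: lin_dual_def bicom_comp_def lin_bicom_def)

theorem proposition2p55:
  fixes A :: "'a set" and B :: "'b set" and C :: "'c set"
    and M :: "'m set" and f :: "'m \<Rightarrow> 'a" and g :: "'m \<Rightarrow> 'b"
    and N :: "'n set" and f' :: "'n \<Rightarrow> 'b" and g' :: "'n \<Rightarrow> 'c"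
  assumes "is_span A B M f g" and "is_span B C N f' g'"
  shows "bicom_iso
           (bicom_comp (lin_dual A (lin_bicom M f g)) (lin_dual B (lin_bicom N f' g')))
           (lin_dual A (bicom_comp (lin_bicom M f g) (lin_bicom N f' g')))"
    (is "bicom_iso ?L ?R")
proof -
  let ?fib = "\<lambda>a. {m \<in> M. f m = a}"
  let ?\<psi> = "\<lambda>_ (m, k). (m, k ())"
  have pos_L: "pos ?L = (\<lambda>a. (a, restrict g (?fib a))) ` A"
    using assms(1)
    by (subst pos_bicom_comp_lin_dual) (auto simp: is_span_def lin_dual_def lin_bicom_def)
  have "bij_betw fst (pos ?L) (pos ?R)"
    unfolding pos_L by (rule bij_betw_byWitness[where f' = "\<lambda>a. (a, restrict g (?fib a))"])
      (auto simp: lin_dual_def)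
  moreover have "lbl ?R (fst p) = lbl ?L p
      \<and> bij_betw (?\<psi> p) (dir ?R (fst p)) (dir ?L p)
      \<and> (\<forall>d\<in>dir ?R (fst p). rl ?L p (?\<psi> p d) = rl ?R (fst p) d)"
    if "p \<in> pos ?L" for p
  proof -
    from that obtain a where p: "p = (a, restrict g (?fib a))"
      unfolding pos_L by blast
    have "dir ?L p = (SIGMA m:?fib a. {n \<in> N. f' n = g m})"
      unfolding p dir_bicom_comp_lin_dual by (auto simp: lin_dual_def lin_bicom_def)
    moreover have "bij_betw (?\<psi> p) (dir ?R (fst p)) (SIGMA m:?fib a. {n \<in> N. f' n = g m})"
      unfolding p dir_lin_dual_comp_lin_bicom fst_conv
      by (rule bij_betw_Sigma_fibrewise) (rule bij_betw_eval_singleton)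
    ultimately show ?thesis
      unfolding p by (auto simp: bicom_comp_def lin_dual_def lin_bicom_def)
  qed
  ultimately show ?thesis
    unfolding bicom_iso_def by (intro exI[where x = fst] exI[where x = ?\<psi>]) blast
qed

end
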